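(* For every integer $n\ge 0$, the nanostar dendrimer $D_3[n]$ satisfies $$SO(D_3[n])=(63\cdot 2^n-30)\sqrt{2}+(18\cdot 2^n-12)\sqrt{13}.$$
   Context: For a finite simple graph $G$, $SO(G)=\sum_{uv\in E(G)}\sqrt{d_u^2+d_v^2}$, where $d_u$ is the degree of $u$ in $G$ (the Sombor index). Define rooted graphs $B_m$ recursively: $B_0$ is a hexagon $C_6$ with a distinguished root vertex; for $m\ge 1$, $B_m$ is obtained from a hexagon with vertices $a_1,\ldots,a_6$ in cyclic order, a new vertex $b$ joined by an edge to $a_4$, and two disjoint copies of $B_{m-1}$ whose roots are each joined by an edge to $b$; the root of $B_m$ is $a_1$. The dendrimer $D_3[n]$ is obtained from three disjoint copies of $B_n$ and a new central vertex $c$ joined by an edge to the root of each copy. *)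

theory Defs
  imports Complex_Main
begin

text \<open>A finite simple graph is represented by its edge set: a set of 2-element sets of vertices.
  Vertices are encoded as lists of naturals (address of the vertex in the recursive construction).\<close>

definition deg :: "'a set set \<Rightarrow> 'a \<Rightarrow> nat" where
  "deg E u = card {e \<in> E. u \<in> e}"

definition sombor :: "'a set set \<Rightarrow> real" where
  "sombor E = (\<Sum>e\<in>E. sqrt (\<Sum>x\<in>e. (real (deg E x))^2))"

text \<open>Hexagon on vertices [0],...,[5] in cyclic order; a_k is [k-1].\<close>
definition hexE :: "nat list set set" where
  "hexE = {{[i], [(i + 1) mod 6]} | i. i < 6}"

text \<open>Rooted graph B_m; its root is always the vertex [0]. In B_(m+1), b = [6] is joined to
  a_4 = [3], and two copies of B_m (vertices prefixed by 7 resp. 8) have their roots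
  [7,0], [8,0] joined to b.\<close>
fun Bm :: "nat \<Rightarrow> nat list set set" where
  "Bm 0 = hexE"
| "Bm (Suc m) = hexE \<union> {{[3], [6]}}
     \<union> (image ((#) 7)) ` Bm m \<union> (image ((#) 8)) ` Bm m
     \<union> {{[6], [7, 0]}, {[6], [8, 0]}}"

definition D3 :: "nat \<Rightarrow> nat list set set" where
  "D3 n = (\<Union>i<3. (image ((#) i)) ` Bm n) \<union> {{[], [i, 0]} | i. i < (3::nat)}"

end

theory Submission
  imports Defs
begin

(* Let T m be the Sombor sum over the edges of B_m, computed with the degrees B_m has once its
   root receives one extra neighbour: every copy of B_m inside B_(m+1) and inside D_3[n] is
   attached to the rest of the graph by exactly one edge at its root, so its edges contribute
   exactly T m there. The hexagon gives T 0 = 8 sqrt 2 + 2 sqrt 13; the nine edges of B_(m+1)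
   outside its two copies of B_m contribute 13 sqrt 2 + 4 sqrt 13, so
   T (m+1) = 2 T m + 13 sqrt 2 + 4 sqrt 13 and T m = (21 2^m - 13) sqrt 2 + (6 2^m - 4) sqrt 13.
   The three central edges of D_3[n] join vertices of degree 3, so SO(D_3[n]) = 3 T n + 9 sqrt 2. *)

lemma deg_empty [simp]: "deg {} v = 0"
  unfolding deg_def by simp

lemma deg_insert:
  assumes "finite E"
  shows "deg (insert e E) v = (if v \<in> e \<and> e \<notin> E then Suc (deg E v) else deg E v)"
proof (cases "v \<in> e")
  case True
  then have "{f \<in> insert e E. v \<in> f} = insert e {f \<in> E. v \<in> f}"
    by blast
  with True show ?thesis
    unfolding deg_def using assms by (simp add: card_insert_if)
next
  case False
  then have "{f \<in> insert e E. v \<in> f} = {f \<in> E. v \<in> f}"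
    by blast
  with False show ?thesis
    unfolding deg_def by simp
qed

lemma deg_Un_disjoint:
  assumes "finite A" "finite B" "A \<inter> B = {}"
  shows "deg (A \<union> B) v = deg A v + deg B v"
proof -
  have "{e \<in> A \<union> B. v \<in> e} = {e \<in> A. v \<in> e} \<union> {e \<in> B. v \<in> e}"
    by blast
  then show ?thesis
    unfolding deg_def using assms by (simp add: card_Un_disjoint disjoint_iff)
qed

definition sombor_with :: "('a \<Rightarrow> nat) \<Rightarrow> 'a set set \<Rightarrow> real" where
  "sombor_with d E = (\<Sum>e\<in>E. sqrt (\<Sum>x\<in>e. (real (d x))^2))"

lemma sombor_eq_sombor_with: "sombor E = sombor_with (deg E) E"
  unfolding sombor_def sombor_with_def ..

lemma sombor_with_Un_disjoint:
  "finite A \<Longrightarrow> finite B \<Longrightarrow> A \<inter> B = {} \<Longrightarrow>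
    sombor_with d (A \<union> B) = sombor_with d A + sombor_with d B"
  unfolding sombor_with_def by (rule sum.union_disjoint)

definition prefixed_copies :: "'a set \<Rightarrow> 'a list set set \<Rightarrow> 'a list set set" where
  "prefixed_copies I E = (\<Union>i\<in>I. image ((#) i) ` E)"

lemma prefixed_copies_vertex:
  "e \<in> prefixed_copies I E \<Longrightarrow> x \<in> e \<Longrightarrow> x \<noteq> [] \<and> hd x \<in> I"
  unfolding prefixed_copies_def by auto

lemma finite_prefixed_copies:
  "finite I \<Longrightarrow> finite E \<Longrightarrow> finite (prefixed_copies I E)"
  unfolding prefixed_copies_def by simp

lemma inj_on_image_Cons: "inj_on (image ((#) i)) X"
  by (simp add: inj_on_def inj_image_eq_iff)

lemma deg_prefixed_copies_Cons:
  "deg (prefixed_copies I E) (i # w) = (if i \<in> I then deg E w else 0)"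
proof -
  have "{e \<in> prefixed_copies I E. i # w \<in> e} =
      (if i \<in> I then image ((#) i) ` {e \<in> E. w \<in> e} else {})"
    unfolding prefixed_copies_def by auto
  then show ?thesis
    unfolding deg_def by (simp add: card_image inj_on_image_Cons)
qed

lemma deg_prefixed_copies_Nil: "deg (prefixed_copies I E) [] = 0"
proof -
  have "{e \<in> prefixed_copies I E. [] \<in> e} = {}"
    by (auto dest: prefixed_copies_vertex)
  then show ?thesis
    unfolding deg_def by (simp only: card.empty)
qed

lemma sombor_with_image_Cons:
  "sombor_with d (image ((#) i) ` E) = sombor_with (\<lambda>w. d (i # w)) E"
proof -
  have "(\<Sum>x\<in>(#) i ` e. f x) = (\<Sum>x\<in>e. f (i # x))"
    for e and f :: "'a list \<Rightarrow> real"
    by (simp add: sum.reindex)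
  then show ?thesis
    unfolding sombor_with_def by (simp add: sum.reindex inj_on_image_Cons)
qed

lemma sombor_with_prefixed_copies:
  assumes "finite I" "finite E" "{} \<notin> E"
  shows "sombor_with d (prefixed_copies I E) = (\<Sum>i\<in>I. sombor_with (\<lambda>w. d (i # w)) E)"
proof -
  have disjoint: "image ((#) i) ` E \<inter> image ((#) j) ` E = {}" if "i \<noteq> j" for i j
  proof -
    have False if "x \<in> E" "y \<in> E" "image ((#) i) x = image ((#) j) y" for x y
    proof -
      obtain a where "a \<in> x"
        using \<open>x \<in> E\<close> assms(3) by fastforce
      then have "i # a \<in> image ((#) j) y"
        using that(3) by blast
      then show False
        using \<open>i \<noteq> j\<close> by auto
    qed
    then show ?thesis
      by blast
  qed
  have "sombor_with d (prefixed_copies I E) = (\<Sum>i\<in>I. sombor_with d (image ((#) i) ` E))"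
    unfolding prefixed_copies_def sombor_with_def
    using assms(1,2) disjoint by (subst sum.UNION_disjoint) auto
  then show ?thesis
    by (simp add: sombor_with_image_Cons)
qed

lemma hexE_eq: "hexE = {{[0],[1]}, {[1],[2]}, {[2],[3]}, {[3],[4]}, {[4],[5]}, {[5],[0]}}"
proof
  show "hexE \<subseteq> {{[0],[1]}, {[1],[2]}, {[2],[3]}, {[3],[4]}, {[4],[5]}, {[5],[0]}}"
  proof
    fix e
    assume "e \<in> hexE"
    then obtain i where i: "i < 6" "e = {[i], [(i + 1) mod 6]}"
      unfolding hexE_def by blast
    then have "i = 0 \<or> i = 1 \<or> i = 2 \<or> i = 3 \<or> i = 4 \<or> i = 5"
      by arith
    then show "e \<in> {{[0],[1]}, {[1],[2]}, {[2],[3]}, {[3],[4]}, {[4],[5]}, {[5],[0]}}"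
      using i(2) by (elim disjE) (simp_all add: doubleton_eq_iff)
  qed
next
  have hexE_memI: "{[i], [j]} \<in> hexE" if "i < 6" "j = (i + 1) mod 6" for i j
    unfolding hexE_def using that by blast
  show "{{[0],[1]}, {[1],[2]}, {[2],[3]}, {[3],[4]}, {[4],[5]}, {[5],[0]}} \<subseteq> hexE"
    by (intro insert_subsetI empty_subsetI; rule hexE_memI; simp)
qed

lemma finite_Bm: "finite (Bm m)"
  by (induction m) (auto simp: hexE_eq)

lemma empty_notin_Bm: "{} \<notin> Bm m"
  by (induction m) (auto simp: hexE_eq)

definition Bm_core :: "nat list set set" where
  "Bm_core = hexE \<union> {{[3], [6]}, {[6], [7, 0]}, {[6], [8, 0]}}"

lemma Bm_core_eq:
  "Bm_core = {{[0],[1]}, {[1],[2]}, {[2],[3]}, {[3],[4]}, {[4],[5]}, {[5],[0]},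
    {[3],[6]}, {[6],[7,0]}, {[6],[8,0]}}"
  unfolding Bm_core_def hexE_eq by auto

lemma finite_Bm_core: "finite Bm_core"
  unfolding Bm_core_eq by simp

lemma Bm_Suc_eq: "Bm (Suc m) = Bm_core \<union> prefixed_copies {7, 8} (Bm m)"
  unfolding Bm_core_def prefixed_copies_def by auto

declare Bm.simps(2) [simp del]

lemma Bm_core_disjoint: "Bm_core \<inter> prefixed_copies {7, 8} E = {}"
proof -
  have "\<exists>x\<in>e. hd x \<notin> {7, 8}" if "e \<in> Bm_core" for e
    using that unfolding Bm_core_eq by auto
  then show ?thesis
    by (fastforce dest: prefixed_copies_vertex)
qed

lemma deg_Bm_Suc:
  "deg (Bm (Suc m)) v = deg Bm_core v + deg (prefixed_copies {7, 8} (Bm m)) v"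
  unfolding Bm_Suc_eq
  by (simp add: deg_Un_disjoint Bm_core_disjoint finite_prefixed_copies finite_Bm finite_Bm_core)

lemma deg_Bm_root: "deg (Bm m) [0] = 2"
  by (cases m) (simp_all add: hexE_eq deg_Bm_Suc Bm_core_eq deg_insert deg_prefixed_copies_Cons
      doubleton_eq_iff)

definition attached_deg :: "nat \<Rightarrow> nat list \<Rightarrow> nat" where
  "attached_deg m v = deg (Bm m) v + (if v = [0] then 1 else 0)"

definition attached_sombor :: "nat \<Rightarrow> real" where
  "attached_sombor m = sombor_with (attached_deg m) (Bm m)"

lemma sqrt_8: "sqrt 8 = 2 * sqrt 2"
  using real_sqrt_mult[of 4 2] by simp

lemma sqrt_18: "sqrt 18 = 3 * sqrt 2"
  using real_sqrt_mult[of 9 2] by simp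

lemma attached_sombor_0: "attached_sombor 0 = 8 * sqrt 2 + 2 * sqrt 13"
  unfolding attached_sombor_def attached_deg_def sombor_with_def
  by (simp add: hexE_eq deg_insert doubleton_eq_iff sqrt_8)

lemma attached_deg_Suc_copy:
  "i \<in> {7, 8} \<Longrightarrow> attached_deg (Suc m) (i # w) = attached_deg m w"
  unfolding attached_deg_def
  by (auto simp: deg_Bm_Suc deg_prefixed_copies_Cons Bm_core_eq deg_insert doubleton_eq_iff)

lemma sombor_with_Bm_core:
  "sombor_with (attached_deg (Suc m)) Bm_core = 13 * sqrt 2 + 4 * sqrt 13"
  unfolding sombor_with_def attached_deg_def
  by (simp add: Bm_core_eq deg_Bm_Suc deg_insert deg_prefixed_copies_Cons deg_Bm_root
      doubleton_eq_iff sqrt_8 sqrt_18)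


lemma attached_sombor_Suc:
  "attached_sombor (Suc m) = 2 * attached_sombor m + 13 * sqrt 2 + 4 * sqrt 13"
proof -
  have "attached_sombor (Suc m) = sombor_with (attached_deg (Suc m)) Bm_core
      + (\<Sum>i\<in>{7, 8}. sombor_with (\<lambda>w. attached_deg (Suc m) (i # w)) (Bm m))"
    unfolding attached_sombor_def Bm_Suc_eq
    by (simp add: sombor_with_Un_disjoint sombor_with_prefixed_copies Bm_core_disjoint
        finite_prefixed_copies finite_Bm finite_Bm_core empty_notin_Bm)
  also have "\<dots> = 13 * sqrt 2 + 4 * sqrt 13 + 2 * attached_sombor m"
    by (simp add: sombor_with_Bm_core attached_deg_Suc_copy attached_sombor_def)
  finally show ?thesis
    by simp
qed

lemma attached_sombor_eq:
  "attached_sombor m = (21 * 2 ^ m - 13) * sqrt 2 + (6 * 2 ^ m - 4) * sqrt 13"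
  by (induction m) (simp_all add: attached_sombor_0 attached_sombor_Suc algebra_simps)

definition D3_spokes :: "nat list set set" where
  "D3_spokes = {{[], [i, 0]} | i. i < (3::nat)}"

lemma D3_spokes_eq: "D3_spokes = {{[], [0, 0]}, {[], [1, 0]}, {[], [2, 0]}}"
  unfolding D3_spokes_def by (auto simp: less_Suc_eq numeral_3_eq_3)

lemma finite_D3_spokes: "finite D3_spokes"
  unfolding D3_spokes_eq by simp

lemma D3_eq: "D3 n = prefixed_copies {..<3} (Bm n) \<union> D3_spokes"
  unfolding D3_def D3_spokes_def prefixed_copies_def ..

lemma D3_spokes_disjoint: "prefixed_copies I E \<inter> D3_spokes = {}"
  unfolding D3_spokes_def by (auto dest: prefixed_copies_vertex)

lemma sombor_with_D3:
  "sombor_with d (D3 n) =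
    sombor_with d (prefixed_copies {..<3} (Bm n)) + sombor_with d D3_spokes"
  unfolding D3_eq
  by (simp add: sombor_with_Un_disjoint D3_spokes_disjoint finite_prefixed_copies finite_Bm
      finite_D3_spokes)

lemma deg_D3: "deg (D3 n) v = deg (prefixed_copies {..<3} (Bm n)) v + deg D3_spokes v"
  unfolding D3_eq
  by (simp add: deg_Un_disjoint D3_spokes_disjoint finite_prefixed_copies finite_Bm
      finite_D3_spokes)

lemma deg_D3_copy: "i < 3 \<Longrightarrow> deg (D3 n) (i # w) = attached_deg n w"
  unfolding deg_D3 attached_deg_def
  by (auto simp: deg_prefixed_copies_Cons D3_spokes_eq deg_insert doubleton_eq_iff
      less_Suc_eq numeral_3_eq_3)

lemma deg_D3_center: "deg (D3 n) [] = 3"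
  unfolding deg_D3
  by (simp add: deg_prefixed_copies_Nil D3_spokes_eq deg_insert doubleton_eq_iff)

lemma sombor_with_D3_spokes: "sombor_with (deg (D3 n)) D3_spokes = 9 * sqrt 2"
  unfolding D3_spokes_eq sombor_with_def
  by (simp add: deg_D3_center deg_D3_copy attached_deg_def deg_Bm_root doubleton_eq_iff
      sqrt_18)

theorem mainTheorem12:
  fixes n :: nat
  shows "sombor (D3 n) = (63 * 2 ^ n - 30) * sqrt 2 + (18 * 2 ^ n - 12) * sqrt 13"
proof -
  have copy_sombor: "sombor_with (\<lambda>w. deg (D3 n) (i # w)) (Bm n) = attached_sombor n"
    if "i < 3" for i
    using that by (simp add: deg_D3_copy attached_sombor_def)
  have "sombor (D3 n) = sombor_with (deg (D3 n)) (prefixed_copies {..<3} (Bm n))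
      + sombor_with (deg (D3 n)) D3_spokes"
    by (simp add: sombor_eq_sombor_with sombor_with_D3)
  also have "\<dots> = 3 * attached_sombor n + 9 * sqrt 2"
    by (simp add: sombor_with_prefixed_copies finite_Bm empty_notin_Bm copy_sombor
        sombor_with_D3_spokes)
  finally show ?thesis
    by (simp add: attached_sombor_eq algebra_simps)
qed

end
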